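(* Let $n\ge1$, let $a_0^{(n)},a_1^{(n)},\dots,a_{n-1}^{(n)}$ be positive real numbers, and let $H$ be a nonzero real inner product space with inner product $(\cdot,\cdot)$ and norm $\|\cdot\|$. For $u^0,\dots,u^n\in H$ write $\nabla_\tau u^k=u^k-u^{k-1}$. Then the inequality $$\frac12\sum_{k=1}^n a_{n-k}^{(n)}\big(\|u^k\|^2-\|u^{k-1}\|^2\big)\le\Big(\sum_{k=1}^n a_{n-k}^{(n)}\nabla_\tau u^k,\;u^n\Big)$$ holds for all $u^0,\dots,u^n\in H$ if and only if $a_{n-k}^{(n)}$ is monotonically increasing with respect to $k$, i.e. $a_{n-1}^{(n)}\le a_{n-2}^{(n)}\le\dots\le a_0^{(n)}$.
   Context: In the paper the $a_{n-k}^{(n)}$ are discrete convolution kernels of a discrete Caputo operator $\mathrm{D}_\tau^\alpha u^n=\sum_{k=1}^n a_{n-k}^{(n)}\nabla_\tau u^k$, so the inequality reads $\frac12\mathrm{D}_\tau^\alpha\|u^n\|^2\le(\mathrm{D}_\tau^\alpha u^n,u^n)$. *)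

theory Defs
  imports "HOL-Analysis.Analysis"
begin

end

theory Submission
  imports Defs
begin

text \<open>With weights \<open>w k = a (n - k)\<close>, the identity
  \<open>2 (x - y, z) - (\<parallel>x\<parallel>\<^sup>2 - \<parallel>y\<parallel>\<^sup>2) = \<parallel>z - y\<parallel>\<^sup>2 - \<parallel>z - x\<parallel>\<^sup>2\<close> with \<open>z = u\<^sup>n\<close> and a
  summation by parts show that twice the gap between the two sides of the inequality is
  \<open>w 1 \<parallel>u\<^sup>n - u\<^sup>0\<parallel>\<^sup>2 + \<Sum>(w (k+1) - w k) \<parallel>u\<^sup>n - u\<^sup>k\<parallel>\<^sup>2\<close>, summed over \<open>1 \<le> k < n\<close>.
  This is nonnegative when the weights increase, and a sequence \<open>u\<close> that is nonzero
  only at index \<open>j\<close> isolates the coefficient \<open>w (j+1) - w j\<close>.\<close>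

lemma sum_mult_backward_diff_by_parts:
  fixes w e :: "nat \<Rightarrow> 'a::comm_ring"
  assumes "1 \<le> n"
  shows "(\<Sum>k=1..n. w k * (e (k - 1) - e k))
    = w 1 * e 0 - w n * e n + (\<Sum>k=1..<n. (w (k + 1) - w k) * e k)"
  using assms by (induction n rule: dec_induct) (simp_all add: algebra_simps)

lemma inner_diff_minus_half_norms:
  fixes x y z :: "'a::real_inner"
  shows "inner (x - y) z - ((norm x)\<^sup>2 - (norm y)\<^sup>2) / 2
    = ((norm (z - y))\<^sup>2 - (norm (z - x))\<^sup>2) / 2"
  by (simp add: power2_norm_eq_inner inner_diff_left inner_diff_right inner_commute
      field_simps)

lemma weighted_increments_energy_gap:
  fixes u :: "nat \<Rightarrow> 'a::real_inner" and w :: "nat \<Rightarrow> real"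
  assumes "1 \<le> n"
  shows "inner (\<Sum>k=1..n. w k *\<^sub>R (u k - u (k - 1))) (u n)
      - (1/2) * (\<Sum>k=1..n. w k * ((norm (u k))\<^sup>2 - (norm (u (k - 1)))\<^sup>2))
    = (1/2) * (w 1 * (norm (u n - u 0))\<^sup>2
      + (\<Sum>k=1..<n. (w (k + 1) - w k) * (norm (u n - u k))\<^sup>2))"
proof -
  define e where "e i = (norm (u n - u i))\<^sup>2" for i
  have "inner (\<Sum>k=1..n. w k *\<^sub>R (u k - u (k - 1))) (u n)
      - (1/2) * (\<Sum>k=1..n. w k * ((norm (u k))\<^sup>2 - (norm (u (k - 1)))\<^sup>2))
    = (\<Sum>k=1..n. w k * (inner (u k - u (k - 1)) (u n)
        - ((norm (u k))\<^sup>2 - (norm (u (k - 1)))\<^sup>2) / 2))"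
    by (simp add: inner_sum_left sum_distrib_left right_diff_distrib diff_divide_distrib
        flip: sum_subtractf)
  also have "\<dots> = (\<Sum>k=1..n. w k * ((e (k - 1) - e k) / 2))"
    by (simp only: inner_diff_minus_half_norms e_def)
  also have "\<dots> = (1/2) * (\<Sum>k=1..n. w k * (e (k - 1) - e k))"
    by (simp add: sum_distrib_left)
  also have "\<dots> = (1/2) * (w 1 * e 0 + (\<Sum>k=1..<n. (w (k + 1) - w k) * e k))"
    using sum_mult_backward_diff_by_parts[OF assms, of w e] by (simp add: e_def)
  finally show ?thesis
    by (simp add: e_def)
qed

lemma weighted_increments_energy_le:
  fixes u :: "nat \<Rightarrow> 'a::real_inner" and w :: "nat \<Rightarrow> real"
  assumes "1 \<le> n" and "0 \<le> w 1" and "\<And>k. 1 \<le> k \<Longrightarrow> k < n \<Longrightarrow> w k \<le> w (k + 1)"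
  shows "(1/2) * (\<Sum>k=1..n. w k * ((norm (u k))\<^sup>2 - (norm (u (k - 1)))\<^sup>2))
    \<le> inner (\<Sum>k=1..n. w k *\<^sub>R (u k - u (k - 1))) (u n)"
proof -
  have "0 \<le> (\<Sum>k=1..<n. (w (k + 1) - w k) * (norm (u n - u k))\<^sup>2)"
    by (rule sum_nonneg) (use assms(3) in simp)
  moreover have "0 \<le> w 1 * (norm (u n - u 0))\<^sup>2"
    using assms(2) by simp
  ultimately have "0 \<le> (1/2) * (w 1 * (norm (u n - u 0))\<^sup>2
      + (\<Sum>k=1..<n. (w (k + 1) - w k) * (norm (u n - u k))\<^sup>2))"
    by simp
  then show ?thesis
    using weighted_increments_energy_gap[OF assms(1), where u = u and w = w] by linarith
qed

lemma weighted_increments_energy_le_imp_mono: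
  fixes w :: "nat \<Rightarrow> real" and x :: "'a::real_inner"
  assumes "x \<noteq> 0" and "1 \<le> j" and "j < n"
    and le: "\<forall>u :: nat \<Rightarrow> 'a.
      (1/2) * (\<Sum>k=1..n. w k * ((norm (u k))\<^sup>2 - (norm (u (k - 1)))\<^sup>2))
        \<le> inner (\<Sum>k=1..n. w k *\<^sub>R (u k - u (k - 1))) (u n)"
  shows "w j \<le> w (j + 1)"
proof -
  define u :: "nat \<Rightarrow> 'a" where "u i = (if i = j then x else 0)" for i
  have "(\<Sum>k=1..<n. (w (k + 1) - w k) * (norm (u n - u k))\<^sup>2)
      = (\<Sum>k\<in>{1..<n}. if k = j then (w (j + 1) - w j) * (norm x)\<^sup>2 else 0)"
    using assms(2,3) by (intro sum.cong) (auto simp: u_def)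
  also have "\<dots> = (w (j + 1) - w j) * (norm x)\<^sup>2"
    using assms(2,3) by simp
  finally have "(\<Sum>k=1..<n. (w (k + 1) - w k) * (norm (u n - u k))\<^sup>2)
      = (w (j + 1) - w j) * (norm x)\<^sup>2" .
  moreover have "u n = 0" and "u 0 = 0"
    using assms(2,3) by (simp_all add: u_def)
  ultimately have "0 \<le> (w (j + 1) - w j) * (norm x)\<^sup>2"
    using le[rule_format, of u] weighted_increments_energy_gap[where n = n and u = u and w = w]
      assms(2,3)
    by simp
  with \<open>x \<noteq> 0\<close> show ?thesis
    by (simp add: zero_le_mult_iff)
qed

theorem theorem3:
  fixes n :: nat and a :: "nat \<Rightarrow> real"
  assumes "n \<ge> 1"
    and "\<And>j. j < n \<Longrightarrow> a j > 0"
    and "\<exists>x::'a::real_inner. x \<noteq> 0"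
  shows "(\<forall>u :: nat \<Rightarrow> 'a.
            (1/2) * (\<Sum>k=1..n. a (n - k) * ((norm (u k))\<^sup>2 - (norm (u (k - 1)))\<^sup>2))
              \<le> inner (\<Sum>k=1..n. a (n - k) *\<^sub>R (u k - u (k - 1))) (u n))
         \<longleftrightarrow> (\<forall>k. 1 \<le> k \<and> k < n \<longrightarrow> a (n - k) \<le> a (n - (k + 1)))"
proof
  assume "\<forall>u :: nat \<Rightarrow> 'a.
    (1/2) * (\<Sum>k=1..n. a (n - k) * ((norm (u k))\<^sup>2 - (norm (u (k - 1)))\<^sup>2))
      \<le> inner (\<Sum>k=1..n. a (n - k) *\<^sub>R (u k - u (k - 1))) (u n)"
  moreover obtain x :: 'a where "x \<noteq> 0"
    using assms(3) by blast
  ultimately show "\<forall>k. 1 \<le> k \<and> k < n \<longrightarrow> a (n - k) \<le> a (n - (k + 1))"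
    using weighted_increments_energy_le_imp_mono[where x = x and n = n and w = "\<lambda>k. a (n - k)"]
    by auto
next
  assume "\<forall>k. 1 \<le> k \<and> k < n \<longrightarrow> a (n - k) \<le> a (n - (k + 1))"
  moreover have "0 \<le> a (n - 1)"
    using assms(1) assms(2)[of "n - 1"] by simp
  ultimately show "\<forall>u :: nat \<Rightarrow> 'a.
    (1/2) * (\<Sum>k=1..n. a (n - k) * ((norm (u k))\<^sup>2 - (norm (u (k - 1)))\<^sup>2))
      \<le> inner (\<Sum>k=1..n. a (n - k) *\<^sub>R (u k - u (k - 1))) (u n)"
    using weighted_increments_energy_le[OF assms(1), where w = "\<lambda>k. a (n - k)"] by auto
qed

end
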